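(* Let $R$ be a local ring and let $s=\sum_{i=1}^{\infty}s_ix^i\in R[[x]]$ be central in $R[[x]]$ with $s\in J\big(R[[x]]\big)$. Let $A(x)\in M_2\big(R[[x]];s\big)$. If $A(0)$ is similar in $M_2(R;s(0))$ to $\left[\begin{smallmatrix} u&1\\ v&w\end{smallmatrix}\right]$ (respectively, to $\left[\begin{smallmatrix} w&1\\ v&u\end{smallmatrix}\right]$) for some $u\in 1+J(R)$, $v\in U(R)$, $w\in J(R)$, then $A(x)$ is similar in $M_2\big(R[[x]];s\big)$ to $\left[\begin{smallmatrix} u(x)&1\\ v(x)&w(x)\end{smallmatrix}\right]$ (respectively, to $\left[\begin{smallmatrix} w(x)&1\\ v(x)&u(x)\end{smallmatrix}\right]$) for some $u(x)\in 1+J\big(R[[x]]\big)$, $v(x)\in U\big(R[[x]]\big)$, $w(x)\in J\big(R[[x]]\big)$ with $u(0)=u$, $v(0)=v$, $w(0)=w$.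
   Context: All rings are associative with identity. A ring $R$ is local if $R/J(R)$ is a division ring, where $J(R)$ is the Jacobson radical; $U(T)$ is the group of units of a ring $T$. $R[[x]]$ is the formal power series ring; for $f\in R[[x]]$, $f(0)$ is its constant term, and for a matrix $A(x)$ over $R[[x]]$, $A(0)$ is obtained by taking constant terms of all entries. For a ring $T$ and a central element $s\in T$, $M_2(T;s)$ denotes the ring whose elements are the $2\times 2$ arrays $\left[\begin{smallmatrix} a&b\\ c&d\end{smallmatrix}\right]$ with $a,b,c,d\in T$, with componentwise addition and multiplication $\left[\begin{smallmatrix} a&b\\ c&d\end{smallmatrix}\right]\left[\begin{smallmatrix} a'&b'\\ c'&d'\end{smallmatrix}\right]=\left[\begin{smallmatrix} aa'+s^2bc'&ab'+bd'\\ ca'+dc'&s^2cb'+dd'\end{smallmatrix}\right]$. Two elements $A,B\in M_2(T;s)$ are similar if $B=P^{-1}AP$ for some unit $P$ of $M_2(T;s)$. *)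

theory Defs
  imports "HOL-Computational_Algebra.Formal_Power_Series"
begin

definition units_of_ring :: "'a::ring_1 set" where
  "units_of_ring = {a. \<exists>b. a * b = 1 \<and> b * a = 1}"

(* Jacobson radical, via the standard element-wise characterization:
   a \<in> J(R) iff 1 - r a is left invertible for every r \<in> R. *)
definition jacobson :: "'a::ring_1 set" where
  "jacobson = {a. \<forall>r. \<exists>y. y * (1 - r * a) = 1}"

(* R is local iff R/J(R) is a division ring: the quotient is nonzero (1 \<notin> J)
   and every element outside J is invertible modulo J. *)
definition local_ring :: "'a::ring_1 itself \<Rightarrow> bool" where
  "local_ring _ \<longleftrightarrow> (1::'a) \<notin> jacobson \<and>
     (\<forall>a::'a. a \<notin> jacobson \<longrightarrow>
        (\<exists>b. a * b - 1 \<in> jacobson \<and> b * a - 1 \<in> jacobson))"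

(* Elements of M_2(T;s): arrays [a b; c d] encoded as (a, b, c, d) *)
type_synonym 'a m2 = "'a \<times> 'a \<times> 'a \<times> 'a"

definition m2mult :: "'a::ring_1 \<Rightarrow> 'a m2 \<Rightarrow> 'a m2 \<Rightarrow> 'a m2" where
  "m2mult s X Y = (case X of (a, b, c, d) \<Rightarrow> case Y of (a', b', c', d') \<Rightarrow>
     (a * a' + s^2 * b * c', a * b' + b * d', c * a' + d * c', s^2 * c * b' + d * d'))"

definition m2one :: "'a::ring_1 m2" where
  "m2one = (1, 0, 0, 1)"

definition m2similar :: "'a::ring_1 \<Rightarrow> 'a m2 \<Rightarrow> 'a m2 \<Rightarrow> bool" where
  "m2similar s A B \<longleftrightarrow> (\<exists>P Q. m2mult s P Q = m2one \<and> m2mult s Q P = m2one \<and>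
      B = m2mult s (m2mult s Q A) P)"

definition m2const :: "'a::ring_1 fps m2 \<Rightarrow> 'a m2" where
  "m2const A = (case A of (a, b, c, d) \<Rightarrow> (fps_nth a 0, fps_nth b 0, fps_nth c 0, fps_nth d 0))"

end

theory Submission
  imports Defs
begin

text \<open>
  A similarity in \<open>M\<^sub>2(R; s(0))\<close> lifts to \<open>M\<^sub>2(R[[x]]; s)\<close>: take the constant matrix \<open>P\<close>; since
  \<open>s(0) = 0\<close>, invertibility of \<open>P\<close> forces its diagonal entries to be units, so \<open>P\<close> is invertible
  over \<open>R[[x]]\<close> by the Schur-complement formula. Conjugating \<open>A(x)\<close> by \<open>P\<close> gives a matrix whose
  upper right entry has constant term \<open>1\<close>, hence is a unit \<open>b\<close>, and conjugation by
  \<open>diag(1, b\<^sup>-\<^sup>1)\<close> turns it into \<open>1\<close> without changing constant terms. Finally a power series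
  is a unit, resp. lies in the Jacobson radical, as soon as its constant term does.
\<close>

lemma fps_units_of_ringI:
  fixes f :: "'a::ring_1 fps"
  assumes "fps_nth f 0 \<in> units_of_ring"
  shows "f \<in> units_of_ring"
proof -
  from assms obtain c where c: "fps_nth f 0 * c = 1" "c * fps_nth f 0 = 1"
    by (auto simp: units_of_ring_def)
  show ?thesis
    unfolding units_of_ring_def
    using fps_right_inverse[OF c(1)] fps_left_inverse'[OF c(2) c(1)] by blast
qed

lemma fps_jacobsonI:
  fixes f :: "'a::ring_1 fps"
  assumes "fps_nth f 0 \<in> jacobson"
  shows "f \<in> jacobson"
  unfolding jacobson_def
proof (intro CollectI allI)
  fix r :: "'a fps"
  from assms obtain y where "y * (1 - fps_nth r 0 * fps_nth f 0) = 1"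
    by (auto simp: jacobson_def)
  then have "y * fps_nth (1 - r * f) 0 = 1" by simp
  from fps_left_inverse[OF this] show "\<exists>y. y * (1 - r * f) = 1" by blast
qed

definition central :: "'a::ring_1 \<Rightarrow> bool" where
  "central t \<longleftrightarrow> (\<forall>x. t * x = x * t)"

lemma central_power2_commute: "central t \<Longrightarrow> t^2 * x = x * t^2"
  unfolding central_def power2_eq_square by (metis mult.assoc)

lemma m2mult_assoc:
  assumes "central t"
  shows "m2mult t (m2mult t X Y) Z = m2mult t X (m2mult t Y Z)"
proof -
  note comm = central_power2_commute[OF assms]
  have comm': "x * (t^2 * y) = x * (y * t^2)" for x y using comm by simp
  obtain a b c d where X: "X = (a, b, c, d)" by (cases X) auto
  obtain a' b' c' d' where Y: "Y = (a', b', c', d')" by (cases Y) auto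
  obtain a'' b'' c'' d'' where Z: "Z = (a'', b'', c'', d'')" by (cases Z) auto
  show ?thesis
    unfolding X Y Z m2mult_def by (simp add: algebra_simps comm comm')
qed

lemma m2mult_one_left [simp]: "m2mult t m2one X = X"
  and m2mult_one_right [simp]: "m2mult t X m2one = X"
  by (cases X; simp add: m2mult_def m2one_def)+

lemma m2mult_inverse_unique:
  assumes "central t" "m2mult t X Y = m2one" "m2mult t Y' X = m2one"
  shows "Y' = Y"
  using m2mult_assoc[OF assms(1), of Y' X Y] assms(2,3) by simp

lemma m2similar_trans:
  assumes "central t" "m2similar t A B" "m2similar t B C"
  shows "m2similar t A C"
proof -
  note assoc = m2mult_assoc[OF assms(1)]
  from assms(2) obtain P Q where PQ: "m2mult t P Q = m2one" "m2mult t Q P = m2one"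
    "B = m2mult t (m2mult t Q A) P" unfolding m2similar_def by blast
  from assms(3) obtain P' Q' where PQ': "m2mult t P' Q' = m2one" "m2mult t Q' P' = m2one"
    "C = m2mult t (m2mult t Q' B) P'" unfolding m2similar_def by blast
  have "m2mult t (m2mult t P P') (m2mult t Q' Q) = m2one"
    by (simp add: assoc PQ PQ' flip: assoc[of P' Q' Q])
  moreover have "m2mult t (m2mult t Q' Q) (m2mult t P P') = m2one"
    by (simp add: assoc PQ PQ' flip: assoc[of Q P P'])
  moreover have "C = m2mult t (m2mult t (m2mult t Q' Q) A) (m2mult t P P')"
    by (simp add: PQ' PQ assoc)
  ultimately show ?thesis unfolding m2similar_def by blast
qed

lemma m2const_m2mult:
  fixes s :: "'a::ring_1 fps"
  shows "m2const (m2mult s X Y) = m2mult (fps_nth s 0) (m2const X) (m2const Y)"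
  by (cases X; cases Y; simp add: m2const_def m2mult_def fps_power_zeroth)

lemma m2mult_zero_inverse_diag:
  assumes "m2mult 0 (a, b, c, d) Y = m2one" "m2mult 0 Y (a, b, c, d) = m2one"
  shows "a \<in> units_of_ring" "d \<in> units_of_ring"
  using assms by (cases Y; auto simp: m2mult_def m2one_def units_of_ring_def)+

lemma m2mult_schur_inverse:
  assumes "central t"
    and a: "a * a' = 1" "a' * a = 1"
    and e: "e * e' = 1" "e' * e = 1"
    and d: "d = e + t^2 * c * a' * b"
  defines "Y \<equiv> (a' + t^2 * a' * b * e' * c * a', - (a' * b * e'), - (e' * c * a'), e')"
  shows "m2mult t (a, b, c, d) Y = m2one" "m2mult t Y (a, b, c, d) = m2one"
proof -
  note comm = central_power2_commute[OF assms(1)]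
  have comm': "x * (t^2 * y) = x * (y * t^2)" for x y using comm by simp
  have a': "a * (a' * x) = x" "a' * (a * x) = x" for x using a by (simp_all flip: mult.assoc)
  have e': "e * (e' * x) = x" "e' * (e * x) = x" for x using e by (simp_all flip: mult.assoc)
  show "m2mult t (a, b, c, d) Y = m2one" "m2mult t Y (a, b, c, d) = m2one"
    unfolding Y_def m2mult_def m2one_def d by (simp_all add: algebra_simps comm comm' a a' e e')
qed

lemma m2_inverse_lift:
  fixes s :: "'a::ring_1 fps" and X :: "'a fps m2"
  assumes s0: "fps_nth s 0 = 0" and "central s"
    and inv0: "m2mult 0 (m2const X) Y0 = m2one" "m2mult 0 Y0 (m2const X) = m2one"
  shows "\<exists>Y. m2mult s X Y = m2one \<and> m2mult s Y X = m2one \<and> m2const Y = Y0"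
proof -
  obtain a b c d where X: "X = (a, b, c, d)" by (cases X) auto
  have "fps_nth a 0 \<in> units_of_ring" "fps_nth d 0 \<in> units_of_ring"
    using m2mult_zero_inverse_diag[OF inv0[unfolded X m2const_def, simplified]] by simp_all
  then have "a \<in> units_of_ring" and d0: "fps_nth d 0 \<in> units_of_ring"
    using fps_units_of_ringI by blast+
  then obtain a' where a': "a * a' = 1" "a' * a = 1" by (auto simp: units_of_ring_def)
  define e where "e = d - s^2 * c * a' * b"
  have "fps_nth e 0 = fps_nth d 0" by (simp add: e_def fps_power_zeroth s0)
  then obtain e' where e': "e * e' = 1" "e' * e = 1"
    using fps_units_of_ringI[of e] d0 by (auto simp: units_of_ring_def)
  obtain Y where XY: "m2mult s X Y = m2one" and YX: "m2mult s Y X = m2one"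
    using m2mult_schur_inverse[OF \<open>central s\<close> a' e', of d c b] by (auto simp: X e_def)
  have "m2mult 0 (m2const X) (m2const Y) = m2one"
    using arg_cong[OF XY, of m2const] by (simp add: m2const_m2mult s0 m2one_def m2const_def[of "(1, 0, 0, 1)"])
  then have "m2const Y = Y0"
    using m2mult_inverse_unique[of 0, OF _ _ inv0(2)] by (simp add: central_def)
  with XY YX show ?thesis by blast
qed

lemma m2similar_lift:
  fixes s :: "'a::ring_1 fps" and A :: "'a fps m2"
  assumes s0: "fps_nth s 0 = 0" and cs: "central s"
    and "m2similar (fps_nth s 0) (m2const A) B0"
  shows "\<exists>B. m2similar s A B \<and> m2const B = B0"
proof -
  from assms(3) s0 obtain P0 Q0 where PQ0: "m2mult 0 P0 Q0 = m2one" "m2mult 0 Q0 P0 = m2one"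
    "B0 = m2mult 0 (m2mult 0 Q0 (m2const A)) P0" unfolding m2similar_def by auto
  obtain p1 p2 p3 p4 where P0: "P0 = (p1, p2, p3, p4)" by (cases P0) auto
  define P where "P = (fps_const p1, fps_const p2, fps_const p3, fps_const p4)"
  have "m2const P = P0" by (simp add: P_def P0 m2const_def)
  with m2_inverse_lift[OF s0 cs, of P Q0] PQ0
  obtain Q where Q: "m2mult s P Q = m2one" "m2mult s Q P = m2one" "m2const Q = Q0" by auto
  define B where "B = m2mult s (m2mult s Q A) P"
  have "m2similar s A B" unfolding m2similar_def B_def using Q by blast
  moreover have "m2const B = B0"
    unfolding B_def PQ0(3) by (simp add: m2const_m2mult s0 \<open>m2const P = P0\<close> Q(3))
  ultimately show ?thesis by blast
qed

lemma m2similar_normalize_upper_right: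
  assumes "b * b' = 1" "b' * b = 1"
  shows "m2similar t (a, b, c, d) (a, 1, b * c, b * d * b')"
  unfolding m2similar_def
  by (rule exI[of _ "(1, 0, 0, b')"], rule exI[of _ "(1, 0, 0, b)"])
     (simp add: m2mult_def m2one_def assms)

lemma m2similar_normal_form_lift:
  fixes s :: "'a::ring_1 fps" and A :: "'a fps m2"
  assumes s0: "fps_nth s 0 = 0" and cs: "central s"
    and "m2similar (fps_nth s 0) (m2const A) (p, 1, q, r)"
  shows "\<exists>a v d. fps_nth a 0 = p \<and> fps_nth v 0 = q \<and> fps_nth d 0 = r \<and>
           m2similar s A (a, 1, v, d)"
proof -
  obtain a b c d where sim: "m2similar s A (a, b, c, d)"
    and "m2const (a, b, c, d) = (p, 1, q, r)"
    using m2similar_lift[OF assms] by (metis prod_cases4)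
  then have const: "fps_nth a 0 = p" "fps_nth b 0 = 1" "fps_nth c 0 = q" "fps_nth d 0 = r"
    by (simp_all add: m2const_def)
  then obtain b' where b': "b * b' = 1" "b' * b = 1"
    using fps_units_of_ringI[of b] by (auto simp: units_of_ring_def)
  have "fps_nth b' 0 = 1" using arg_cong[OF b'(1), of "\<lambda>f. fps_nth f 0"] const(2) by simp
  then have "fps_nth (b * c) 0 = q" "fps_nth (b * d * b') 0 = r" using const by simp_all
  moreover have "m2similar s A (a, 1, b * c, b * d * b')"
    using m2similar_trans[OF cs sim m2similar_normalize_upper_right[OF b']] .
  ultimately show ?thesis using const(1) by blast
qed

theorem lemma2p17:
  fixes s :: "'a::ring_1 fps" and A :: "'a fps m2"
  assumes "local_ring TYPE('a)"
    and "fps_nth s 0 = 0"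
    and "\<forall>f. s * f = f * s"
    and "s \<in> jacobson"
  shows "(\<forall>u v w. u - 1 \<in> (jacobson :: 'a set) \<and> v \<in> units_of_ring \<and> w \<in> jacobson \<and>
            m2similar (fps_nth s 0) (m2const A) (u, 1, v, w) \<longrightarrow>
          (\<exists>ux vx wx. ux - 1 \<in> jacobson \<and> vx \<in> units_of_ring \<and> wx \<in> jacobson \<and>
             fps_nth ux 0 = u \<and> fps_nth vx 0 = v \<and> fps_nth wx 0 = w \<and>
             m2similar s A (ux, 1, vx, wx)))
       \<and> (\<forall>u v w. u - 1 \<in> (jacobson :: 'a set) \<and> v \<in> units_of_ring \<and> w \<in> jacobson \<and>
            m2similar (fps_nth s 0) (m2const A) (w, 1, v, u) \<longrightarrow>
          (\<exists>ux vx wx. ux - 1 \<in> jacobson \<and> vx \<in> units_of_ring \<and> wx \<in> jacobson \<and>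
             fps_nth ux 0 = u \<and> fps_nth vx 0 = v \<and> fps_nth wx 0 = w \<and>
             m2similar s A (wx, 1, vx, ux)))"
proof -
  have lift: "\<exists>a v d. fps_nth a 0 = p \<and> fps_nth v 0 = q \<and> fps_nth d 0 = r \<and>
                m2similar s A (a, 1, v, d)"
    if "m2similar (fps_nth s 0) (m2const A) (p, 1, q, r)" for p q r
    using m2similar_normal_form_lift[OF assms(2) _ that] assms(3) by (simp add: central_def)
  have "f - 1 \<in> jacobson" if "fps_nth f 0 - 1 \<in> jacobson" for f :: "'a fps"
    using fps_jacobsonI[of "f - 1"] that by simp
  with lift fps_jacobsonI fps_units_of_ringI show ?thesis by metis
qed

end
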